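(* Let $s,t$ be real numbers. For every integer $n\geq 3$, $$\det W_n = (-1)^{n-1}\Big( s^{n-1}t + \Big\lfloor \frac{n}{2}\Big\rfloor\Big\lfloor\frac{n-1}{2}\Big\rfloor s^{n-3}t^3\Big).$$
   Context: All matrices below are $n\times n$ upper Hessenberg with subdiagonal entries $a_{i+1,i}=s$ and $a_{ij}=0$ for $i>j+1$; only the entries $a_{ij}$ with $i\le j$ are specified. For $n = 2k+1$ ($k\ge 1$), $W_n$ has: $a_{1j}=t$ for $1\le j\le k$, $a_{1j}=0$ for $k+1\le j\le 2k$, $a_{1n}=t$; for $2\le i\le k+1$: $a_{ij}=0$ for $i\le j\le k$, $a_{ij}=t$ for $k+1\le j\le 2k$, $a_{in}=0$; for $k+2\le i\le n$: $a_{ij}=0$ for $i\le j\le 2k$, $a_{in}=t$. For $n=2k+2$ ($k\ge 0$), $W_n$ has: $a_{1j}=t$ for $1\le j\le k$, $a_{1j}=0$ for $k+1\le j\le 2k+1$, $a_{1n}=t$; for $2\le i\le k+1$: $a_{ij}=0$ for $i\le j\le k$, $a_{ij}=t$ for $k+1\le j\le 2k+1$, $a_{in}=0$; for $k+2\le i\le n$: $a_{ij}=0$ for $i\le j\le 2k+1$, $a_{in}=t$. *)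

theory Defs
  imports "Jordan_Normal_Form.Determinant"
begin

text \<open>Entry a_{ij} (1-based indices, 1 <= i,j <= n) of the upper Hessenberg matrix W_n
  with subdiagonal s. The parameter k is determined by n = 2k+1 (n odd) or n = 2k+2 (n even).\<close>
definition W_entry :: "nat \<Rightarrow> real \<Rightarrow> real \<Rightarrow> nat \<Rightarrow> nat \<Rightarrow> real" where
  "W_entry n s t i j =
    (if i = j + 1 then s
     else if i > j + 1 then 0
     else if odd n then
       (let k = (n - 1) div 2 in
        if i = 1 then (if j \<le> k then t else if j \<le> 2*k then 0 else t)
        else if i \<le> k + 1 then (if j \<le> k then 0 else if j \<le> 2*k then t else 0)
        else (if j \<le> 2*k then 0 else t))
     else
       (let k = (n - 2) div 2 in
        if i = 1 then (if j \<le> k then t else if j \<le> 2*k+1 then 0 else t)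
        else if i \<le> k + 1 then (if j \<le> k then 0 else if j \<le> 2*k+1 then t else 0)
        else (if j \<le> 2*k+1 then 0 else t)))"

definition W :: "nat \<Rightarrow> real \<Rightarrow> real \<Rightarrow> real mat" where
  "W n s t = mat n n (\<lambda>(i, j). W_entry n s t (i + 1) (j + 1))"

end

theory Submission
  imports Defs
begin

text \<open>Write \<open>D\<^sub>j\<close> for the leading principal \<open>j \<times> j\<close> minor of an upper Hessenberg matrix
  with constant subdiagonal \<open>s\<close>. Expanding along the last row gives
  \<open>D\<^sub>j\<^sub>+\<^sub>1 = \<Sum>\<^sub>i\<^sub>\<le>\<^sub>j (-s)\<^bsup>j-i\<^esup> a\<^sub>i\<^sub>j D\<^sub>i\<close> (0-based). For \<open>W\<^sub>n\<close>, with \<open>k = \<lfloor>(n-1)/2\<rfloor>\<close>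
  and \<open>m = n - 1\<close>, only the first row contributes to \<open>D\<^sub>j\<^sub>+\<^sub>1\<close> for \<open>j < k\<close>, giving \<open>(-s)\<^sup>j t\<close>;
  for \<open>k \<le> j < m\<close> only the rows \<open>1..k\<close> contribute, each giving \<open>(-s)\<^bsup>j-1\<^esup> t\<^sup>2\<close>; and
  in the last column row 0 and the \<open>m - k\<close> rows below row \<open>k\<close> contribute
  \<open>(-s)\<^sup>m t\<close> and \<open>k (-s)\<^bsup>m-2\<^esup> t\<^sup>3\<close> each. Since \<open>k (m - k) = \<lfloor>n/2\<rfloor> \<lfloor>(n-1)/2\<rfloor>\<close>
  the odd and even cases need no separate treatment.\<close>

definition hessenberg_mat :: "'a \<Rightarrow> nat \<Rightarrow> (nat \<Rightarrow> nat \<Rightarrow> 'a::zero) \<Rightarrow> 'a mat" where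
  "hessenberg_mat s n g =
     mat n n (\<lambda>(i, j). if i = j + 1 then s else if i > j + 1 then 0 else g i j)"

lemma hessenberg_mat_carrier: "hessenberg_mat s n g \<in> carrier_mat n n"
  unfolding hessenberg_mat_def by auto

lemma hessenberg_mat_cong:
  "(\<And>i j. j < n \<Longrightarrow> g i j = h i j) \<Longrightarrow> hessenberg_mat s n g = hessenberg_mat s n h"
  by (rule eq_matI) (auto simp: hessenberg_mat_def)

lemma det_hessenberg_mat_0: "det (hessenberg_mat s 0 g) = 1"
  by (simp add: hessenberg_mat_def det_def)

text \<open>The last row has only two nonzero entries; deleting it together with column \<open>n\<close>
  leaves a Hessenberg matrix whose last column is column \<open>n + 1\<close> of \<open>g\<close>.\<close>
lemma det_hessenberg_mat_last_row:
  fixes s :: "'a::comm_ring_1"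
  shows "det (hessenberg_mat s (Suc (Suc n)) g)
    = g (Suc n) (Suc n) * det (hessenberg_mat s (Suc n) g)
      - s * det (hessenberg_mat s (Suc n) (\<lambda>i j. if j = n then g i (Suc n) else g i j))"
proof -
  let ?A = "hessenberg_mat s (Suc (Suc n)) g"
  have "det ?A = (\<Sum>j<Suc (Suc n). ?A $$ (Suc n, j) * cofactor ?A (Suc n) j)"
    by (rule laplace_expansion_row[OF hessenberg_mat_carrier]) simp
  also have "\<dots> = ?A $$ (Suc n, n) * cofactor ?A (Suc n) n
                  + ?A $$ (Suc n, Suc n) * cofactor ?A (Suc n) (Suc n)"
  proof -
    have "(\<Sum>j<n. ?A $$ (Suc n, j) * cofactor ?A (Suc n) j) = 0"
      by (rule sum.neutral) (auto simp: hessenberg_mat_def)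
    then show ?thesis by simp
  qed
  moreover have "mat_delete ?A (Suc n) (Suc n) = hessenberg_mat s (Suc n) g"
    by (rule eq_matI) (auto simp: hessenberg_mat_def mat_delete_def)
  moreover have "mat_delete ?A (Suc n) n
      = hessenberg_mat s (Suc n) (\<lambda>i j. if j = n then g i (Suc n) else g i j)"
    by (rule eq_matI) (auto simp: hessenberg_mat_def mat_delete_def)
  ultimately show ?thesis
    by (simp add: cofactor_def hessenberg_mat_def)
qed

lemma det_hessenberg_mat_Suc:
  fixes s :: "'a::comm_ring_1"
  shows "det (hessenberg_mat s (Suc n) g)
    = (\<Sum>i\<le>n. (-s) ^ (n - i) * g i n * det (hessenberg_mat s i g))"
proof (induction n arbitrary: g)
  case 0
  have "hessenberg_mat s 1 g = mat 1 1 (\<lambda>_. g 0 0)"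
    by (rule eq_matI) (auto simp: hessenberg_mat_def)
  then show ?case by (simp add: det_single det_hessenberg_mat_0)
next
  case (Suc n)
  define g' where "g' = (\<lambda>i j. if j = n then g i (Suc n) else g i j)"
  have minors_g': "det (hessenberg_mat s i g') = det (hessenberg_mat s i g)" if "i \<le> n" for i
    using that by (subst hessenberg_mat_cong[of i g' g]) (auto simp: g'_def)
  have "det (hessenberg_mat s (Suc (Suc n)) g)
      = g (Suc n) (Suc n) * det (hessenberg_mat s (Suc n) g) - s * det (hessenberg_mat s (Suc n) g')"
    unfolding g'_def by (rule det_hessenberg_mat_last_row)
  also have "det (hessenberg_mat s (Suc n) g')
      = (\<Sum>i\<le>n. (-s) ^ (n - i) * g i (Suc n) * det (hessenberg_mat s i g))"
  proof -
    have "g' i n = g i (Suc n)" for i by (simp add: g'_def)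
    then show ?thesis unfolding Suc.IH by (intro sum.cong) (auto simp: minors_g')
  qed
  also have "s * \<dots> = - (\<Sum>i\<le>n. (-s) ^ (Suc n - i) * g i (Suc n) * det (hessenberg_mat s i g))"
    by (simp add: sum_distrib_left Suc_diff_le sum_negf[symmetric] mult_ac)
  finally show ?case by simp
qed

definition W_upper :: "'a::zero \<Rightarrow> nat \<Rightarrow> nat \<Rightarrow> nat \<Rightarrow> nat \<Rightarrow> 'a" where
  "W_upper t k m i j =
     (if j = m then (if i = 0 \<or> k < i then t else 0)
      else if j < k then (if i = 0 then t else 0)
      else if 0 < i \<and> i \<le> k then t else 0)"

lemma W_eq_hessenberg_mat: "W n s t = hessenberg_mat s n (W_upper t ((n - 1) div 2) (n - 1))"
proof (cases "odd n")
  case True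
  then obtain k where "n = 2 * k + 1" by (rule oddE)
  then show ?thesis
    by (intro eq_matI) (auto simp: W_def hessenberg_mat_def W_entry_def W_upper_def)
next
  case False
  then obtain a where "n = 2 * a" by (auto elim: evenE)
  then show ?thesis
    by (cases a) (auto intro!: eq_matI simp: W_def hessenberg_mat_def W_entry_def W_upper_def)
qed

context
  fixes s t :: "'a::comm_ring_1" and k m :: nat
  assumes k_less_m: "k < m"
begin

abbreviation W_minor :: "nat \<Rightarrow> 'a" where
  "W_minor j \<equiv> det (hessenberg_mat s j (W_upper t k m))"

lemma W_minor_initial:
  assumes "j < k"
  shows "W_minor (Suc j) = (-s) ^ j * t"
proof -
  have "W_minor (Suc j) = (\<Sum>i\<in>{0}. (-s) ^ (j - i) * W_upper t k m i j * W_minor i)"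
    unfolding det_hessenberg_mat_Suc
    by (rule sum.mono_neutral_right) (use assms k_less_m in \<open>auto simp: W_upper_def\<close>)
  then show ?thesis
    using assms k_less_m by (simp add: W_upper_def det_hessenberg_mat_0)
qed

lemma W_minor_middle:
  assumes "k \<le> j" "j < m"
  shows "W_minor (Suc j) = of_nat k * (-s) ^ (j - 1) * t ^ 2"
proof -
  have "W_minor (Suc j) = (\<Sum>i\<in>{1..k}. (-s) ^ (j - i) * W_upper t k m i j * W_minor i)"
    unfolding det_hessenberg_mat_Suc
    by (rule sum.mono_neutral_right) (use assms in \<open>auto simp: W_upper_def\<close>)
  also have "\<dots> = (\<Sum>i\<in>{1..k}. (-s) ^ (j - 1) * t ^ 2)"
  proof (rule sum.cong)
    fix i assume i: "i \<in> {1..k}"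
    then obtain i' where i': "i = Suc i'" "i' < k" by (cases i) auto
    have "(-s) ^ (j - i) * (-s) ^ i' = (-s) ^ (j - 1)"
      using i' assms by (simp add: power_add[symmetric])
    then show "(-s) ^ (j - i) * W_upper t k m i j * W_minor i = (-s) ^ (j - 1) * t ^ 2"
      using i i' assms
      by (simp add: W_minor_initial W_upper_def power2_eq_square mult_ac)
  qed simp
  finally show ?thesis by simp
qed

lemma W_minor_full:
  assumes k_pos: "1 \<le> k"
  shows "W_minor (Suc m) = (-s) ^ m * t + of_nat (k * (m - k)) * (-s) ^ (m - 2) * t ^ 3"
proof -
  have "W_minor (Suc m)
      = (\<Sum>i\<in>insert 0 {Suc k..m}. (-s) ^ (m - i) * W_upper t k m i m * W_minor i)"
    unfolding det_hessenberg_mat_Suc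
    by (rule sum.mono_neutral_right) (auto simp: W_upper_def)
  also have "\<dots> = (-s) ^ m * t + (\<Sum>i\<in>{Suc k..m}. (-s) ^ (m - i) * t * W_minor i)"
    by (simp add: W_upper_def det_hessenberg_mat_0)
  also have "(\<Sum>i\<in>{Suc k..m}. (-s) ^ (m - i) * t * W_minor i)
      = (\<Sum>i\<in>{Suc k..m}. of_nat k * (-s) ^ (m - 2) * t ^ 3)"
  proof (rule sum.cong)
    fix i assume i: "i \<in> {Suc k..m}"
    then obtain i' where i': "i = Suc i'" "k \<le> i'" "i' < m" by (cases i) auto
    have "(-s) ^ (m - i) * (-s) ^ (i' - 1) = (-s) ^ (m - 2)"
      using i' k_pos by (simp add: power_add[symmetric] numeral_2_eq_2)
    then show "(-s) ^ (m - i) * t * W_minor i = of_nat k * (-s) ^ (m - 2) * t ^ 3"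
      using i' by (simp add: W_minor_middle power3_eq_cube power2_eq_square mult_ac)
  qed simp
  finally show ?thesis by (simp add: mult_ac)
qed

end

theorem proposition5p5:
  fixes s t :: real and n :: nat
  assumes "n \<ge> 3"
  shows "det (W n s t) = (-1) ^ (n - 1) *
           (s ^ (n - 1) * t + real ((n div 2) * ((n - 1) div 2)) * s ^ (n - 3) * t ^ 3)"
proof -
  let ?k = "(n - 1) div 2"
  have n: "n = Suc (n - 1)" and k: "?k < n - 1" "1 \<le> ?k"
    using assms by auto
  have "det (W n s t)
      = (-s) ^ (n - 1) * t + real (?k * (n - 1 - ?k)) * (-s) ^ (n - 1 - 2) * t ^ 3"
    unfolding W_eq_hessenberg_mat by (subst n) (rule W_minor_full[OF k])
  moreover have "?k * (n - 1 - ?k) = (n div 2) * ((n - 1) div 2)"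
    by (cases "odd n") (auto elim!: oddE evenE)
  moreover have "(-s) ^ (n - 1 - 2) = (-1) ^ (n - 1) * s ^ (n - 3)"
  proof -
    have "n - 1 = (n - 3) + 2"
      using assms by simp
    then show ?thesis
      by (simp only: power_minus[of s] power_add) simp
  qed
  ultimately show ?thesis
    by (simp add: power_minus[of s] algebra_simps)
qed

end
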